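(* There is a constant $C>0$ depending only on $d$ such that for all $p\in\mathbb{R}^d\setminus\{0\}$ and $t>0$: $H(tp)=tH(p)$; $C^{-1}|p|\le H(p)\le C|p|$; and $\liminf_{q\to p}H(q)\ge H(p)$.
   Context: Discrete Laplacian on $\mathbb{Z}^d$: $\Delta u(x)=\sum_{i=1}^d(u(x+e_i)+u(x-e_i)-2u(x))$. For $p\ne0$, $H(p)=\Delta u_p(0)$ where $u_p:\mathbb{Z}^d\to\mathbb{R}$ is the unique solution of $\Delta u=0$ on $\{p\cdot x>0\}$, $u=0$ on $\{p\cdot x\le0\}$, $\sup_{p\cdot x>0}|u(x)-p\cdot x|<\infty$. *)

theory Defs
  imports "HOL-Analysis.Analysis"
begin

definition unit_vec :: "'d::finite \<Rightarrow> int ^ 'd" where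
  "unit_vec i = (\<chi> j. if j = i then 1 else 0)"

definition dotZ :: "real ^ 'd::finite \<Rightarrow> int ^ 'd \<Rightarrow> real" where
  "dotZ p x = (\<Sum>i\<in>UNIV. p $ i * real_of_int (x $ i))"

definition dlap :: "(int ^ 'd::finite \<Rightarrow> real) \<Rightarrow> int ^ 'd \<Rightarrow> real" where
  "dlap u x = (\<Sum>i\<in>UNIV. u (x + unit_vec i) + u (x - unit_vec i) - 2 * u x)"

definition corrector :: "real ^ 'd::finite \<Rightarrow> (int ^ 'd \<Rightarrow> real) \<Rightarrow> bool" where
  "corrector p u \<longleftrightarrow>
     (\<forall>x. dotZ p x > 0 \<longrightarrow> dlap u x = 0) \<and>
     (\<forall>x. dotZ p x \<le> 0 \<longrightarrow> u x = 0) \<and>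
     (\<exists>B. \<forall>x. dotZ p x > 0 \<longrightarrow> \<bar>u x - dotZ p x\<bar> \<le> B)"

definition Hfun :: "real ^ 'd::finite \<Rightarrow> real" where
  "Hfun p = dlap (THE u. corrector p u) 0"

end

theory Submission
  imports Defs
begin

text \<open>Starting from the subsolution \<open>max (p\<cdot>x) 0\<close>, iterating the neighbour average on the
  half-space \<open>p\<cdot>x > 0\<close> gives an increasing sequence bounded by the supersolution
  \<open>(p\<cdot>x + |p|)\<^sup>+\<close>; its limit is a corrector \<open>u\<^sub>p\<close> with \<open>p\<cdot>x \<le> u\<^sub>p \<le> p\<cdot>x + |p|\<close>.
  A Liouville theorem (a bounded function harmonic in the half-space and vanishing outside it is
  zero) makes the corrector unique, so \<open>H(p) = \<Sum>\<^sub>i u\<^sub>p(e\<^sub>i) + u\<^sub>p(-e\<^sub>i)\<close>. Homogeneity then follows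
  from uniqueness, the two-sided bound from the sub- and supersolution, and lower semicontinuity
  from \<open>H\<close> being the limit of the increasing iterates, each lower semicontinuous in \<open>p\<close>.\<close>

subsection \<open>Linear functionals and neighbour averages on the lattice\<close>

lemma dotZ_add_unit_vec: "dotZ p (x + unit_vec i) = dotZ p x + p $ i"
proof -
  have "dotZ p (x + unit_vec i) =
      (\<Sum>j\<in>UNIV. p $ j * real_of_int (x $ j) + (if j = i then p $ j else 0))"
    unfolding dotZ_def unit_vec_def by (intro sum.cong) (auto simp: algebra_simps)
  then show ?thesis unfolding dotZ_def by (simp add: sum.distrib)
qed

lemma dotZ_diff_unit_vec: "dotZ p (x - unit_vec i) = dotZ p x - p $ i"
proof -
  have "dotZ p (x - unit_vec i) =
      (\<Sum>j\<in>UNIV. p $ j * real_of_int (x $ j) - (if j = i then p $ j else 0))"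
    unfolding dotZ_def unit_vec_def by (intro sum.cong) (auto simp: algebra_simps)
  then show ?thesis unfolding dotZ_def by (simp add: sum_subtractf)
qed

lemma dotZ_0 [simp]: "dotZ p 0 = 0"
  unfolding dotZ_def by simp

lemma dotZ_unit_vec [simp]: "dotZ p (unit_vec i) = p $ i" "dotZ p (- unit_vec i) = - p $ i"
  using dotZ_add_unit_vec[of p 0 i] dotZ_diff_unit_vec[of p 0 i] by simp_all

lemma dotZ_scaleR: "dotZ (t *\<^sub>R p) x = t * dotZ p x"
  unfolding dotZ_def by (simp add: sum_distrib_left mult.assoc)

lemma tendsto_dotZ: "((\<lambda>q. dotZ q x) \<longlongrightarrow> dotZ p x) (nhds p)"
  unfolding dotZ_def by (intro tendsto_intros) (simp add: filterlim_ident)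

lemma sum_power2_vec_nth: "(\<Sum>i\<in>UNIV. (p $ i)\<^sup>2) = (norm p)\<^sup>2"
  for p :: "real ^ 'd::finite"
  unfolding power2_norm_eq_inner inner_vec_def by (simp add: power2_eq_square)

definition nbr_avg :: "(int ^ 'd::finite \<Rightarrow> real) \<Rightarrow> int ^ 'd \<Rightarrow> real" where
  "nbr_avg f x = (\<Sum>i\<in>UNIV. f (x + unit_vec i) + f (x - unit_vec i)) / (2 * real CARD('d))"

lemma dlap_eq_nbr_avg: "dlap u x = 2 * real CARD('d) * (nbr_avg u x - u x)"
  for x :: "int ^ 'd::finite"
  unfolding dlap_def nbr_avg_def by (simp add: sum_subtractf right_diff_distrib)

lemma dlap_eq_0_iff: "dlap u x = 0 \<longleftrightarrow> nbr_avg u x = u x"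
  by (simp add: dlap_eq_nbr_avg)

lemma nbr_avg_mono_nbrs:
  assumes "\<And>i. f (x + unit_vec i) \<le> g (x + unit_vec i) \<and> f (x - unit_vec i) \<le> g (x - unit_vec i)"
  shows "nbr_avg f x \<le> nbr_avg g x"
  unfolding nbr_avg_def using assms by (intro divide_right_mono sum_mono add_mono) auto

lemma nbr_avg_mono: "f \<le> g \<Longrightarrow> nbr_avg f x \<le> nbr_avg g x"
  by (rule nbr_avg_mono_nbrs) (auto simp: le_fun_def)

lemma nbr_avg_cong:
  assumes "\<And>i. f (x + unit_vec i) = g (x + unit_vec i) \<and> f (x - unit_vec i) = g (x - unit_vec i)"
  shows "nbr_avg f x = nbr_avg g x"
  unfolding nbr_avg_def using assms by (intro arg_cong2[where f="(/)"] sum.cong) auto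

lemma nbr_avg_const [simp]: "nbr_avg (\<lambda>_. c) x = c"
  unfolding nbr_avg_def by simp

lemma nbr_avg_linear: "nbr_avg (\<lambda>y. a * f y + b * g y) x = a * nbr_avg f x + b * nbr_avg g x"
  unfolding nbr_avg_def
  by (simp add: sum.distrib sum_distrib_left add_divide_distrib algebra_simps)

lemma nbr_avg_dotZ_plus_const: "nbr_avg (\<lambda>y. dotZ p y + c) x = dotZ p x + c"
  unfolding nbr_avg_def dotZ_add_unit_vec dotZ_diff_unit_vec by (simp add: sum.distrib)

lemma nbr_avg_dotZ_sq:
  fixes p :: "real ^ 'd::finite"
  shows "nbr_avg (\<lambda>y. (dotZ p y)\<^sup>2) x = (dotZ p x)\<^sup>2 + (norm p)\<^sup>2 / real CARD('d)"
proof -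
  have "(\<Sum>i\<in>UNIV. (dotZ p x + p $ i)\<^sup>2 + (dotZ p x - p $ i)\<^sup>2) =
      (\<Sum>i\<in>(UNIV::'d set). 2 * (dotZ p x)\<^sup>2 + 2 * (p $ i)\<^sup>2)"
    by (intro sum.cong) (auto simp: power2_eq_square algebra_simps)
  also have "\<dots> = 2 * real CARD('d) * (dotZ p x)\<^sup>2 + 2 * (norm p)\<^sup>2"
    by (simp add: sum.distrib sum_distrib_left[symmetric] sum_power2_vec_nth)
  finally show ?thesis
    unfolding nbr_avg_def dotZ_add_unit_vec dotZ_diff_unit_vec by (simp add: field_simps)
qed

subsection \<open>Existence: the Perron solution\<close>

definition perron_step :: "real ^ 'd::finite \<Rightarrow> (int ^ 'd \<Rightarrow> real) \<Rightarrow> int ^ 'd \<Rightarrow> real" where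
  "perron_step p f x = (if 0 < dotZ p x then nbr_avg f x else 0)"

definition ramp :: "real ^ 'd::finite \<Rightarrow> int ^ 'd \<Rightarrow> real" where
  "ramp p x = max (dotZ p x) 0"

definition shifted_ramp :: "real ^ 'd::finite \<Rightarrow> int ^ 'd \<Rightarrow> real" where
  "shifted_ramp p x = (if 0 < dotZ p x then dotZ p x + norm p else 0)"

definition perron_iter :: "real ^ 'd::finite \<Rightarrow> nat \<Rightarrow> int ^ 'd \<Rightarrow> real" where
  "perron_iter p n = (perron_step p ^^ n) (ramp p)"

definition perron_sol :: "real ^ 'd::finite \<Rightarrow> int ^ 'd \<Rightarrow> real" where
  "perron_sol p x = (SUP n. perron_iter p n x)"

lemma mono_perron_step: "mono (perron_step p)"
  by (intro monoI) (auto simp: le_fun_def perron_step_def intro: nbr_avg_mono)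

lemma ramp_le_perron_step: "ramp p \<le> perron_step p (ramp p)"
proof (rule le_funI)
  fix x
  have "dotZ p x = nbr_avg (dotZ p) x"
    using nbr_avg_dotZ_plus_const[of p 0 x] by simp
  also have "\<dots> \<le> nbr_avg (ramp p) x"
    by (rule nbr_avg_mono) (simp add: le_fun_def ramp_def)
  finally show "ramp p x \<le> perron_step p (ramp p) x"
    by (simp add: perron_step_def ramp_def)
qed

lemma perron_step_shifted_ramp_le: "perron_step p (shifted_ramp p) \<le> shifted_ramp p"
proof (rule le_funI)
  fix x
  show "perron_step p (shifted_ramp p) x \<le> shifted_ramp p x"
  proof (cases "0 < dotZ p x")
    case True
    have "nbr_avg (shifted_ramp p) x \<le> nbr_avg (\<lambda>y. dotZ p y + norm p) x"
    proof (rule nbr_avg_mono_nbrs)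
      fix i
      have "\<bar>p $ i\<bar> \<le> norm p" by (rule component_le_norm_cart)
      then show "shifted_ramp p (x + unit_vec i) \<le> dotZ p (x + unit_vec i) + norm p \<and>
          shifted_ramp p (x - unit_vec i) \<le> dotZ p (x - unit_vec i) + norm p"
        using True unfolding shifted_ramp_def dotZ_add_unit_vec dotZ_diff_unit_vec by auto
    qed
    with True show ?thesis by (simp add: perron_step_def shifted_ramp_def nbr_avg_dotZ_plus_const)
  qed (simp add: perron_step_def shifted_ramp_def)
qed

lemma perron_iter_Suc: "perron_iter p (Suc n) = perron_step p (perron_iter p n)"
  unfolding perron_iter_def by simp

lemma incseq_perron_iter: "incseq (\<lambda>n. perron_iter p n x)"
  unfolding incseq_def perron_iter_def
  using funpow_mono2[OF mono_perron_step _ order_refl ramp_le_perron_step] by (auto simp: le_fun_def)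

lemma perron_iter_le_shifted_ramp: "perron_iter p n \<le> shifted_ramp p"
proof (induction n)
  case 0
  show ?case by (auto simp: le_fun_def perron_iter_def ramp_def shifted_ramp_def)
next
  case (Suc n)
  have "perron_step p (perron_iter p n) \<le> perron_step p (shifted_ramp p)"
    using Suc.IH mono_perron_step by (rule monoD[rotated])
  then show ?case
    unfolding perron_iter_Suc using perron_step_shifted_ramp_le by (rule order_trans)
qed

lemma ramp_le_perron_iter: "ramp p x \<le> perron_iter p n x"
  using incseq_perron_iter[of p x] by (force simp: incseq_def perron_iter_def)

lemma perron_iter_nonneg: "0 \<le> perron_iter p n x"
  using ramp_le_perron_iter[of p x n] by (simp add: ramp_def)

lemma bdd_above_perron_iter: "bdd_above (range (\<lambda>n. perron_iter p n x))"
  using perron_iter_le_shifted_ramp by (intro bdd_aboveI[where M="shifted_ramp p x"]) (auto simp: le_fun_def)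

lemma perron_iter_tendsto: "(\<lambda>n. perron_iter p n x) \<longlonglongrightarrow> perron_sol p x"
  unfolding perron_sol_def by (rule LIMSEQ_incseq_SUP[OF bdd_above_perron_iter incseq_perron_iter])

lemma perron_iter_le_perron_sol: "perron_iter p n x \<le> perron_sol p x"
  unfolding perron_sol_def by (rule cSUP_upper[OF _ bdd_above_perron_iter]) simp

lemma perron_sol_le_shifted_ramp: "perron_sol p x \<le> shifted_ramp p x"
  unfolding perron_sol_def using perron_iter_le_shifted_ramp by (intro cSUP_least) (auto simp: le_fun_def)

lemma ramp_le_perron_sol: "ramp p x \<le> perron_sol p x"
  using ramp_le_perron_iter perron_iter_le_perron_sol by (rule order_trans)

lemma perron_sol_eq_0: "dotZ p x \<le> 0 \<Longrightarrow> perron_sol p x = 0"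
  using ramp_le_perron_sol[of p x] perron_sol_le_shifted_ramp[of p x]
  by (simp add: ramp_def shifted_ramp_def)

lemma perron_sol_harmonic:
  assumes "0 < dotZ p x"
  shows "nbr_avg (perron_sol p) x = perron_sol p x"
proof -
  have "(\<lambda>n. nbr_avg (perron_iter p n) x) \<longlonglongrightarrow> nbr_avg (perron_sol p) x"
    unfolding nbr_avg_def by (intro tendsto_intros perron_iter_tendsto) simp
  moreover have "(\<lambda>n. nbr_avg (perron_iter p n) x) = (\<lambda>n. perron_iter p (Suc n) x)"
    using assms by (simp add: perron_iter_Suc perron_step_def)
  moreover have "(\<lambda>n. perron_iter p (Suc n) x) \<longlonglongrightarrow> perron_sol p x"
    using perron_iter_tendsto by (rule LIMSEQ_Suc)
  ultimately show ?thesis by (metis LIMSEQ_unique)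
qed

lemma corrector_perron_sol: "corrector p (perron_sol p)"
  unfolding corrector_def
proof (intro conjI allI impI exI)
  fix x
  assume "0 < dotZ p x"
  then show "dlap (perron_sol p) x = 0" by (simp add: dlap_eq_0_iff perron_sol_harmonic)
next
  fix x
  assume "dotZ p x \<le> 0"
  then show "perron_sol p x = 0" by (rule perron_sol_eq_0)
next
  fix x
  assume "0 < dotZ p x"
  then show "\<bar>perron_sol p x - dotZ p x\<bar> \<le> norm p"
    using ramp_le_perron_sol[of p x] perron_sol_le_shifted_ramp[of p x]
    by (simp add: ramp_def shifted_ramp_def)
qed

subsection \<open>Uniqueness: a Liouville theorem for the half-space\<close>

definition avg_on :: "(int ^ 'd::finite) set \<Rightarrow> (int ^ 'd \<Rightarrow> real) \<Rightarrow> int ^ 'd \<Rightarrow> real" where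
  "avg_on E f x = (if x \<in> E then nbr_avg f x else f x)"

lemma mono_avg_on: "mono (avg_on E)"
  by (intro monoI) (auto simp: le_fun_def avg_on_def intro: nbr_avg_mono)

lemma avg_on_linear:
  "avg_on E (\<lambda>y. a * f y + b * g y) = (\<lambda>x. a * avg_on E f x + b * avg_on E g x)"
  by (auto simp: avg_on_def nbr_avg_linear)

lemma funpow_avg_on_linear:
  "(avg_on E ^^ n) (\<lambda>y. a * f y + b * g y) = (\<lambda>x. a * (avg_on E ^^ n) f x + b * (avg_on E ^^ n) g x)"
  by (induction n) (simp_all add: avg_on_linear)

lemma funpow_avg_on_const: "(avg_on E ^^ n) (\<lambda>_. c) = (\<lambda>_. c)"
proof -
  have "avg_on E (\<lambda>_. c) = (\<lambda>_. c)" by (auto simp: avg_on_def)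
  then show ?thesis by (induction n) simp_all
qed

lemma funpow_avg_on_fixed:
  assumes "\<And>x. x \<in> E \<Longrightarrow> nbr_avg f x = f x"
  shows "(avg_on E ^^ n) f = f"
proof -
  have "avg_on E f = f" using assms by (auto simp: avg_on_def)
  then show ?thesis by (induction n) simp_all
qed

lemma funpow_avg_on_indicator_antimono:
  assumes "j \<le> n"
  shows "(avg_on E ^^ n) (indicator E) \<le> ((avg_on E ^^ j) (indicator E) :: _ \<Rightarrow> real)"
proof -
  have step: "avg_on E (indicator E) \<le> (indicator E :: _ \<Rightarrow> real)"
    by (auto simp: le_fun_def avg_on_def indicator_def intro: order_trans[OF nbr_avg_mono[of _ "\<lambda>_. 1"]])
  have below: "(avg_on E ^^ k) (indicator E) \<le> (indicator E :: _ \<Rightarrow> real)" for k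
  proof (induction k)
    case (Suc k)
    have "(avg_on E ^^ Suc k) (indicator E) = (avg_on E ^^ k) (avg_on E (indicator E))"
      by (simp add: funpow_Suc_right del: funpow.simps)
    also have "\<dots> \<le> (avg_on E ^^ k) (indicator E)"
      using mono_avg_on step by (rule funpow_mono)
    finally show ?case using Suc.IH by (rule order_trans)
  qed simp
  have "(avg_on E ^^ n) (indicator E) = (avg_on E ^^ j) ((avg_on E ^^ (n - j)) (indicator E))"
    using assms by (metis funpow_add le_add_diff_inverse comp_apply)
  also have "\<dots> \<le> (avg_on E ^^ j) (indicator E)"
    using mono_avg_on below by (rule funpow_mono)
  finally show ?thesis .
qed

text \<open>\<open>avg_on E\<close> is the transition operator of the random walk stopped on leaving \<open>E\<close>, so the sum
  below is the expected time spent in \<open>E\<close> up to time \<open>n\<close>; a bounded \<open>\<psi>\<close> whose average exceeds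
  it by \<open>c\<close> on \<open>E\<close> bounds it (Dynkin's formula).\<close>

lemma sum_funpow_avg_on_indicator_le:
  assumes psi: "avg_on E psi = (\<lambda>y. psi y + c * indicator E y)"
    and psi_nonneg: "\<And>y. 0 \<le> psi y" and psi_le: "\<And>y. psi y \<le> K"
  shows "c * (\<Sum>j<n. (avg_on E ^^ j) (indicator E) x) \<le> K"
proof -
  have iter: "(avg_on E ^^ k) psi x = psi x + c * (\<Sum>j<k. (avg_on E ^^ j) (indicator E) x)" for k
  proof (induction k)
    case (Suc k)
    have "(avg_on E ^^ Suc k) psi x = (avg_on E ^^ k) (\<lambda>y. 1 * psi y + c * indicator E y) x"
      by (simp add: funpow_Suc_right psi del: funpow.simps)
    also have "\<dots> = (avg_on E ^^ k) psi x + c * (avg_on E ^^ k) (indicator E) x"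
      by (simp only: funpow_avg_on_linear)
    finally show ?case using Suc.IH by (simp add: algebra_simps)
  qed simp
  have "(avg_on E ^^ n) psi x \<le> (avg_on E ^^ n) (\<lambda>_. K) x"
    using funpow_mono[OF mono_avg_on, of psi "\<lambda>_. K" n] psi_le by (auto simp: le_fun_def)
  then show ?thesis using iter[of n] psi_nonneg[of x] by (simp add: funpow_avg_on_const)
qed

lemma funpow_avg_on_indicator_le:
  assumes psi: "avg_on E psi = (\<lambda>y. psi y + c * indicator E y)"
    and "\<And>y. 0 \<le> psi y" "\<And>y. psi y \<le> K" and "0 < c" "0 < n"
  shows "(avg_on E ^^ n) (indicator E) x \<le> K / c / real n"
proof -
  have "real n * (avg_on E ^^ n) (indicator E) x = (\<Sum>j<n. (avg_on E ^^ n) (indicator E) x)"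
    by simp
  also have "\<dots> \<le> (\<Sum>j<n. (avg_on E ^^ j) (indicator E) x)"
    using funpow_avg_on_indicator_antimono[of _ n E] by (intro sum_mono) (simp add: le_fun_def)
  finally have "c * (real n * (avg_on E ^^ n) (indicator E) x) \<le> K"
    using sum_funpow_avg_on_indicator_le[OF assms(1-3)] \<open>0 < c\<close>
    by (meson mult_left_mono less_imp_le order_trans)
  with \<open>0 < c\<close> \<open>0 < n\<close> show ?thesis by (simp add: field_simps)
qed

definition strip :: "real ^ 'd::finite \<Rightarrow> real \<Rightarrow> (int ^ 'd) set" where
  "strip p L = {x. 0 < dotZ p x \<and> dotZ p x < L}"

lemma mem_strip: "x \<in> strip p L \<longleftrightarrow> 0 < dotZ p x \<and> dotZ p x < L"
  by (simp add: strip_def)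

lemma dotZ_nbrs_of_strip:
  assumes "x \<in> strip p L"
  shows "- norm p < dotZ p (x + unit_vec i) \<and> dotZ p (x + unit_vec i) < L + norm p \<and>
    - norm p < dotZ p (x - unit_vec i) \<and> dotZ p (x - unit_vec i) < L + norm p"
  using assms component_le_norm_cart[of p i]
  unfolding strip_def dotZ_add_unit_vec dotZ_diff_unit_vec by auto

lemma nbr_avg_clamp_on_strip:
  assumes "x \<in> strip p L"
  shows "nbr_avg (\<lambda>y. max (dotZ p y) (- norm p) + c) x = max (dotZ p x) (- norm p) + c"
proof -
  have "nbr_avg (\<lambda>y. max (dotZ p y) (- norm p) + c) x = nbr_avg (\<lambda>y. dotZ p y + c) x"
    using dotZ_nbrs_of_strip[OF assms] by (intro nbr_avg_cong) auto
  moreover have "max (dotZ p x) (- norm p) = dotZ p x"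
    using assms norm_ge_zero[of p] unfolding mem_strip by linarith
  ultimately show ?thesis by (simp add: nbr_avg_dotZ_plus_const)
qed

text \<open>The quadratic barrier bounding the exit time from the strip.\<close>

lemma avg_on_strip_clamp_sq:
  fixes p :: "real ^ 'd::finite" and L :: real
  defines "psi \<equiv> \<lambda>y. (min (max (dotZ p y) (- norm p)) (L + norm p))\<^sup>2"
  shows "avg_on (strip p L) psi = (\<lambda>y. psi y + (norm p)\<^sup>2 / real CARD('d) * indicator (strip p L) y)"
proof
  fix x
  show "avg_on (strip p L) psi x = psi x + (norm p)\<^sup>2 / real CARD('d) * indicator (strip p L) x"
  proof (cases "x \<in> strip p L")
    case True
    have "nbr_avg psi x = nbr_avg (\<lambda>y. (dotZ p y)\<^sup>2) x"
      using dotZ_nbrs_of_strip[OF True] unfolding psi_def by (intro nbr_avg_cong) auto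
    moreover have "min (max (dotZ p x) (- norm p)) (L + norm p) = dotZ p x"
      using True norm_ge_zero[of p] unfolding mem_strip by linarith
    then have "psi x = (dotZ p x)\<^sup>2" unfolding psi_def by simp
    ultimately show ?thesis using True by (simp add: avg_on_def nbr_avg_dotZ_sq)
  qed (simp add: avg_on_def)
qed

lemma funpow_avg_on_strip_indicator_le:
  fixes p :: "real ^ 'd::finite"
  assumes "p \<noteq> 0" "0 < L" "0 < n"
  shows "(avg_on (strip p L) ^^ n) (indicator (strip p L)) x
    \<le> real CARD('d) * (L + norm p)\<^sup>2 / (norm p)\<^sup>2 / real n"
proof -
  define psi where "psi y = (min (max (dotZ p y) (- norm p)) (L + norm p))\<^sup>2" for y
  have "psi y \<le> (L + norm p)\<^sup>2" for y
    unfolding psi_def abs_le_square_iff[symmetric] using \<open>0 < L\<close> norm_ge_zero[of p] by linarith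
  then have "(avg_on (strip p L) ^^ n) (indicator (strip p L)) x
      \<le> (L + norm p)\<^sup>2 / ((norm p)\<^sup>2 / real CARD('d)) / real n"
    using assms avg_on_strip_clamp_sq[of p L] unfolding psi_def[symmetric]
    by (intro funpow_avg_on_indicator_le) (auto simp: psi_def)
  then show ?thesis by (simp add: field_simps)
qed

text \<open>Comparing \<open>w\<close> on the strip of width \<open>L\<close> with the stopped walk: the walk either is still
  in the strip (probability \<open>O(L\<^sup>2/n)\<close>) or has left it, where \<open>w\<close> vanishes below and is bounded by
  the harmonic function \<open>M \<phi>/(L + norm p)\<close> above.\<close>

lemma bounded_harmonic_halfspace_le_strip_bound:
  fixes p :: "real ^ 'd::finite" and w :: "int ^ 'd \<Rightarrow> real"
  defines "phi \<equiv> \<lambda>y. max (dotZ p y) (- norm p) + norm p"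
  assumes p: "p \<noteq> 0"
    and harmonic: "\<And>x. 0 < dotZ p x \<Longrightarrow> nbr_avg w x = w x"
    and vanish: "\<And>x. dotZ p x \<le> 0 \<Longrightarrow> w x = 0"
    and bounded: "\<And>x. \<bar>w x\<bar> \<le> M"
    and L: "0 < L" and n: "0 < n"
  shows "w x \<le> M * (real CARD('d) * (L + norm p)\<^sup>2 / (norm p)\<^sup>2 / real n) + M * phi x / (L + norm p)"
proof -
  let ?E = "strip p L" and ?a = "norm p"
  have a: "0 < ?a" using p by simp
  have M: "0 \<le> M" using bounded[of 0] by simp
  have w_le: "w \<le> (\<lambda>y. M * indicator ?E y + M / (L + ?a) * phi y)"
  proof (rule le_funI)
    fix y
    have "M / (L + ?a) * phi y \<ge> 0" using M a L unfolding phi_def by simp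
    moreover have "M / (L + ?a) * phi y \<ge> M" if "L \<le> dotZ p y"
    proof -
      have "M / (L + ?a) * (L + ?a) \<le> M / (L + ?a) * phi y"
        using that M a L unfolding phi_def by (intro mult_left_mono) auto
      then show ?thesis using a L by simp
    qed
    ultimately show "w y \<le> M * indicator ?E y + M / (L + ?a) * phi y"
      using vanish[of y] bounded[of y] by (cases "y \<in> ?E") (auto simp: mem_strip)
  qed
  have phi_fixed: "(avg_on ?E ^^ n) phi = phi"
    by (rule funpow_avg_on_fixed) (simp add: phi_def nbr_avg_clamp_on_strip)
  have "w x = (avg_on ?E ^^ n) w x"
    using funpow_avg_on_fixed[of ?E w n] harmonic by (simp add: mem_strip)
  also have "\<dots> \<le> (avg_on ?E ^^ n) (\<lambda>y. M * indicator ?E y + M / (L + ?a) * phi y) x"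
    using funpow_mono[OF mono_avg_on w_le] by (simp add: le_fun_def)
  also have "\<dots> = M * (avg_on ?E ^^ n) (indicator ?E) x + M / (L + ?a) * phi x"
    unfolding funpow_avg_on_linear phi_fixed by simp
  also have "\<dots> \<le> M * (real CARD('d) * (L + ?a)\<^sup>2 / ?a\<^sup>2 / real n) + M / (L + ?a) * phi x"
    using funpow_avg_on_strip_indicator_le[OF p L n] M
    by (intro add_right_mono mult_left_mono) auto
  finally show ?thesis by simp
qed

lemma bounded_harmonic_halfspace_nonpos:
  fixes p :: "real ^ 'd::finite" and w :: "int ^ 'd \<Rightarrow> real"
  assumes p: "p \<noteq> 0"
    and harmonic: "\<And>x. 0 < dotZ p x \<Longrightarrow> nbr_avg w x = w x"
    and vanish: "\<And>x. dotZ p x \<le> 0 \<Longrightarrow> w x = 0"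
    and bounded: "\<And>x. \<bar>w x\<bar> \<le> M"
  shows "w x \<le> 0"
proof -
  define a where "a = norm p"
  define phi where "phi = max (dotZ p x) (- a) + a"
  define K where "K L = real CARD('d) * (L + a)\<^sup>2 / a\<^sup>2" for L
  have strip_bound: "w x \<le> M * (K L / real n) + M * phi / (L + a)" if "0 < L" "0 < n" for L n
    using bounded_harmonic_halfspace_le_strip_bound[OF assms that] by (simp add: K_def phi_def a_def)
  have wide_strip_bound: "w x \<le> M * phi / (L + a)" if L: "0 < L" for L
  proof (rule LIMSEQ_le_const)
    show "(\<lambda>n. M * (K L / real n) + M * phi / (L + a)) \<longlonglongrightarrow> M * phi / (L + a)"
      using tendsto_add[OF tendsto_mult[OF tendsto_const lim_const_over_n] tendsto_const,
          of M "K L" "M * phi / (L + a)"]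
      by simp
    show "\<exists>N. \<forall>n\<ge>N. w x \<le> M * (K L / real n) + M * phi / (L + a)"
      using strip_bound[OF L] by (intro exI[of _ 1]) auto
  qed
  have "eventually (\<lambda>L. w x \<le> M * phi / (L + a)) at_top"
    using eventually_gt_at_top[of 0] by eventually_elim (rule wide_strip_bound)
  moreover have "((\<lambda>L. M * phi / (L + a)) \<longlongrightarrow> 0) at_top"
    using filterlim_tendsto_add_at_top[OF tendsto_const[of a at_top] filterlim_ident]
    by (intro tendsto_divide_0[OF tendsto_const] filterlim_at_top_imp_at_infinity)
      (simp add: add.commute)
  ultimately show "w x \<le> 0"
    by (intro tendsto_lowerbound[where F="at_top :: real filter"]) simp_all
qed

lemma bounded_harmonic_halfspace_eq_0:
  fixes p :: "real ^ 'd::finite" and w :: "int ^ 'd \<Rightarrow> real"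
  assumes p: "p \<noteq> 0"
    and harmonic: "\<And>x. 0 < dotZ p x \<Longrightarrow> nbr_avg w x = w x"
    and vanish: "\<And>x. dotZ p x \<le> 0 \<Longrightarrow> w x = 0"
    and bounded: "\<And>x. \<bar>w x\<bar> \<le> M"
  shows "w x = 0"
proof -
  have "- w x \<le> 0"
  proof (rule bounded_harmonic_halfspace_nonpos[OF p, of "\<lambda>y. - w y" M])
    show "nbr_avg (\<lambda>y. - w y) y = - w y" if "0 < dotZ p y" for y
      using harmonic[OF that] nbr_avg_linear[of "-1" w 0 w y] by simp
  qed (use vanish bounded in auto)
  then show ?thesis using bounded_harmonic_halfspace_nonpos[OF assms] by (simp add: antisym)
qed

subsection \<open>The effective Hamiltonian\<close>

lemma corrector_unique:
  assumes p: "p \<noteq> 0" and u: "corrector p u" and v: "corrector p v"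
  shows "u = v"
proof -
  obtain B where B: "\<And>x. 0 < dotZ p x \<Longrightarrow> \<bar>u x - dotZ p x\<bar> \<le> B"
    using u unfolding corrector_def by blast
  obtain B' where B': "\<And>x. 0 < dotZ p x \<Longrightarrow> \<bar>v x - dotZ p x\<bar> \<le> B'"
    using v unfolding corrector_def by blast
  have "u x - v x = 0" for x
  proof (rule bounded_harmonic_halfspace_eq_0[OF p, of "\<lambda>y. u y - v y" "\<bar>B\<bar> + \<bar>B'\<bar>"])
    show "nbr_avg (\<lambda>y. u y - v y) y = u y - v y" if "0 < dotZ p y" for y
      using u v that nbr_avg_linear[of 1 u "-1" v y]
      by (simp add: corrector_def dlap_eq_0_iff)
    show "u y - v y = 0" if "dotZ p y \<le> 0" for y
      using u v that by (simp add: corrector_def)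
    show "\<bar>u y - v y\<bar> \<le> \<bar>B\<bar> + \<bar>B'\<bar>" for y
      using u v B[of y] B'[of y] unfolding corrector_def by (cases "0 < dotZ p y") auto
  qed
  then show ?thesis by auto
qed

lemma Hfun_eq_dlap: "p \<noteq> 0 \<Longrightarrow> corrector p u \<Longrightarrow> Hfun p = dlap u 0"
  unfolding Hfun_def by (metis corrector_unique the_equality)

lemma Hfun_eq_sum_perron_sol:
  fixes p :: "real ^ 'd::finite"
  assumes "p \<noteq> 0"
  shows "Hfun p = (\<Sum>i\<in>UNIV. perron_sol p (unit_vec i) + perron_sol p (- unit_vec i))"
  using Hfun_eq_dlap[OF assms corrector_perron_sol] perron_sol_eq_0[of p 0]
  by (simp add: dlap_def sum_subtractf)

lemma corrector_scaleR:
  assumes t: "0 < t" and u: "corrector p u"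
  shows "corrector (t *\<^sub>R p) (\<lambda>x. t * u x)"
proof -
  have dlap_scale: "dlap (\<lambda>y. t * u y) x = t * dlap u x" for x
    unfolding dlap_def by (simp add: sum_distrib_left algebra_simps)
  obtain B where "\<And>x. 0 < dotZ p x \<Longrightarrow> \<bar>u x - dotZ p x\<bar> \<le> B"
    using u unfolding corrector_def by blast
  then have "0 < dotZ p x \<Longrightarrow> \<bar>t * u x - t * dotZ p x\<bar> \<le> t * B" for x
    using t by (metis abs_mult abs_of_pos mult_left_mono less_imp_le right_diff_distrib)
  then show ?thesis
    using u t unfolding corrector_def dotZ_scaleR dlap_scale
    by (auto simp: zero_less_mult_iff mult_le_0_iff)
qed

lemma Hfun_scaleR:
  assumes "p \<noteq> 0" "0 < t"
  shows "Hfun (t *\<^sub>R p) = t * Hfun p"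
proof -
  have "Hfun (t *\<^sub>R p) = dlap (\<lambda>x. t * perron_sol p x) 0"
    using assms by (intro Hfun_eq_dlap corrector_scaleR corrector_perron_sol) auto
  also have "\<dots> = t * Hfun p"
    using Hfun_eq_dlap[OF assms(1) corrector_perron_sol]
    by (simp add: dlap_def sum_distrib_left algebra_simps)
  finally show ?thesis .
qed

lemma norm_le_Hfun:
  fixes p :: "real ^ 'd::finite"
  assumes "p \<noteq> 0"
  shows "norm p \<le> Hfun p"
proof -
  have "norm p \<le> (\<Sum>i\<in>UNIV. \<bar>p $ i\<bar>)" by (rule norm_le_l1_cart)
  also have "\<dots> = (\<Sum>i\<in>UNIV. ramp p (unit_vec i) + ramp p (- unit_vec i))"
    by (intro sum.cong) (auto simp: ramp_def)
  also have "\<dots> \<le> Hfun p"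
    unfolding Hfun_eq_sum_perron_sol[OF assms] by (intro sum_mono add_mono ramp_le_perron_sol)
  finally show ?thesis .
qed

lemma Hfun_le_norm:
  fixes p :: "real ^ 'd::finite"
  assumes "p \<noteq> 0"
  shows "Hfun p \<le> 4 * real CARD('d) * norm p"
proof -
  have "perron_sol p (unit_vec i) + perron_sol p (- unit_vec i) \<le> 4 * norm p" for i
  proof -
    have "shifted_ramp p (unit_vec i) + shifted_ramp p (- unit_vec i) \<le> 4 * norm p"
      using component_le_norm_cart[of p i] by (auto simp: shifted_ramp_def)
    then show ?thesis using perron_sol_le_shifted_ramp[of p] by (smt (verit))
  qed
  then have "Hfun p \<le> (\<Sum>i\<in>(UNIV::'d set). 4 * norm p)"
    unfolding Hfun_eq_sum_perron_sol[OF assms] by (intro sum_mono)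
  then show ?thesis by simp
qed

subsection \<open>Lower semicontinuity\<close>

definition lsc_at :: "'a::topological_space \<Rightarrow> ('a \<Rightarrow> real) \<Rightarrow> bool" where
  "lsc_at p f \<longleftrightarrow> (\<forall>y < f p. eventually (\<lambda>q. y < f q) (nhds p))"

lemma tendsto_imp_lsc_at: "(f \<longlongrightarrow> f p) (nhds p) \<Longrightarrow> lsc_at p f"
  unfolding lsc_at_def by (blast dest: order_tendstoD(1))

lemma lsc_at_add:
  assumes f: "lsc_at p f" and g: "lsc_at p g"
  shows "lsc_at p (\<lambda>q. f q + g q)"
  unfolding lsc_at_def
proof (intro allI impI)
  fix y
  assume "y < f p + g p"
  then have "f p - (f p + g p - y) / 2 < f p" "g p - (f p + g p - y) / 2 < g p" by simp_all
  with f g have "eventually (\<lambda>q. f p - (f p + g p - y) / 2 < f q) (nhds p)"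
    "eventually (\<lambda>q. g p - (f p + g p - y) / 2 < g q) (nhds p)"
    unfolding lsc_at_def by blast+
  then show "eventually (\<lambda>q. y < f q + g q) (nhds p)"
    by eventually_elim (simp add: field_simps)
qed

lemma lsc_at_sum:
  "finite A \<Longrightarrow> (\<And>i. i \<in> A \<Longrightarrow> lsc_at p (f i)) \<Longrightarrow> lsc_at p (\<lambda>q. \<Sum>i\<in>A. f i q)"
proof (induction A rule: finite_induct)
  case empty
  show ?case by (simp add: lsc_at_def)
next
  case (insert i A)
  then show ?case by (simp add: lsc_at_add)
qed

lemma lsc_at_divide:
  assumes c: "0 < c" and f: "lsc_at p f"
  shows "lsc_at p (\<lambda>q. f q / c)"
  unfolding lsc_at_def
proof (intro allI impI)
  fix y
  assume "y < f p / c"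
  with c f have "eventually (\<lambda>q. y * c < f q) (nhds p)"
    unfolding lsc_at_def by (simp add: pos_less_divide_eq)
  then show "eventually (\<lambda>q. y < f q / c) (nhds p)"
    by eventually_elim (simp add: c pos_less_divide_eq)
qed

lemma lsc_at_eventually_ge:
  assumes g: "lsc_at p g" and "eventually (\<lambda>q. g q \<le> f q) (nhds p)" and "g p = f p"
  shows "lsc_at p f"
  unfolding lsc_at_def
proof (intro allI impI)
  fix y
  assume "y < f p"
  with g \<open>g p = f p\<close> have "eventually (\<lambda>q. y < g q) (nhds p)" unfolding lsc_at_def by auto
  with assms(2) show "eventually (\<lambda>q. y < f q) (nhds p)"
    by eventually_elim simp
qed

lemma lsc_at_LIMSEQ_minorants:
  assumes "\<And>n. lsc_at p (g n)" and "\<And>n. eventually (\<lambda>q. g n q \<le> f q) (nhds p)"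
    and "(\<lambda>n. g n p) \<longlonglongrightarrow> f p"
  shows "lsc_at p f"
  unfolding lsc_at_def
proof (intro allI impI)
  fix y
  assume "y < f p"
  then obtain n where "y < g n p"
    using order_tendstoD(1)[OF assms(3)] by (metis eventually_sequentially order_refl)
  with assms(1)[of n] have "eventually (\<lambda>q. y < g n q) (nhds p)"
    unfolding lsc_at_def by blast
  with assms(2)[of n] show "eventually (\<lambda>q. y < f q) (nhds p)"
    by eventually_elim simp
qed

lemma lsc_at_imp_Liminf:
  assumes "lsc_at p f"
  shows "ereal (f p) \<le> Liminf (at p) (\<lambda>q. ereal (f q))"
  unfolding le_Liminf_iff
proof (intro allI impI)
  fix y
  assume y: "y < ereal (f p)"
  show "eventually (\<lambda>q. y < ereal (f q)) (at p)"
  proof (cases y)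
    case (real r)
    with y assms have "eventually (\<lambda>q. r < f q) (nhds p)" unfolding lsc_at_def by simp
    then show ?thesis unfolding eventually_at_filter real by (rule eventually_mono) simp
  next
    case MInf
    then show ?thesis by simp
  next
    case PInf
    with y show ?thesis by simp
  qed
qed

lemma lsc_at_perron_iter: "lsc_at p (\<lambda>q. perron_iter q n x)"
proof (induction n arbitrary: x)
  case 0
  show ?case
    unfolding perron_iter_def ramp_def funpow_0
    by (intro tendsto_imp_lsc_at tendsto_max tendsto_dotZ tendsto_const)
next
  case (Suc n)
  show ?case
  proof (cases "0 < dotZ p x")
    case True
    have "lsc_at p (\<lambda>q. \<Sum>i\<in>UNIV. perron_iter q n (x + unit_vec i) + perron_iter q n (x - unit_vec i))"
      by (intro lsc_at_sum lsc_at_add Suc.IH) simp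
    then have "lsc_at p (\<lambda>q. nbr_avg (perron_iter q n) x)"
      unfolding nbr_avg_def by (rule lsc_at_divide[rotated]) simp
    moreover have "eventually (\<lambda>q. 0 < dotZ q x) (nhds p)"
      using tendsto_dotZ True by (rule order_tendstoD(1))
    then have "eventually (\<lambda>q. nbr_avg (perron_iter q n) x \<le> perron_iter q (Suc n) x) (nhds p)"
      by eventually_elim (simp add: perron_iter_Suc perron_step_def)
    ultimately show ?thesis
      by (rule lsc_at_eventually_ge) (simp add: True perron_iter_Suc perron_step_def)
  next
    case False
    have "lsc_at p (\<lambda>_. 0)" by (simp add: lsc_at_def)
    moreover have "eventually (\<lambda>q. 0 \<le> perron_iter q (Suc n) x) (nhds p)"
      by (simp add: perron_iter_nonneg)
    ultimately show ?thesis
      by (rule lsc_at_eventually_ge) (simp add: False perron_iter_Suc perron_step_def)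
  qed
qed

lemma lsc_at_Hfun:
  fixes p :: "real ^ 'd::finite"
  assumes p: "p \<noteq> 0"
  shows "lsc_at p Hfun"
proof (rule lsc_at_LIMSEQ_minorants)
  define g where "g n q = (\<Sum>i\<in>UNIV. perron_iter q n (unit_vec i) + perron_iter q n (- unit_vec i))"
    for n and q :: "real ^ 'd"
  show "lsc_at p (g n)" for n
    unfolding g_def by (intro lsc_at_sum lsc_at_add lsc_at_perron_iter) auto
  have "eventually (\<lambda>q. q \<noteq> 0) (nhds p)"
    using p t1_space_nhds by blast
  then show "eventually (\<lambda>q. g n q \<le> Hfun q) (nhds p)" for n
    by eventually_elim
      (simp add: g_def Hfun_eq_sum_perron_sol add_mono sum_mono perron_iter_le_perron_sol)
  show "(\<lambda>n. g n p) \<longlonglongrightarrow> Hfun p"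
    unfolding g_def Hfun_eq_sum_perron_sol[OF p] by (intro tendsto_intros perron_iter_tendsto)
qed

theorem mainTheorem4:
  "\<exists>C>0. \<forall>p :: real ^ 'd::finite. p \<noteq> 0 \<longrightarrow>
      (\<forall>t>0. Hfun (t *\<^sub>R p) = t * Hfun p) \<and>
      norm p / C \<le> Hfun p \<and> Hfun p \<le> C * norm p \<and>
      Liminf (at p) (\<lambda>q. ereal (Hfun q)) \<ge> ereal (Hfun p)"
proof (intro exI[of _ "4 * real CARD('d)"] conjI allI impI)
  have "1 \<le> real CARD('d)" by (simp add: Suc_le_eq)
  then have C: "1 \<le> 4 * real CARD('d)" by linarith
  then show "0 < 4 * real CARD('d)" by simp
  fix p :: "real ^ 'd"
  assume p: "p \<noteq> 0"
  show "norm p / (4 * real CARD('d)) \<le> Hfun p"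
    using C norm_le_Hfun[OF p] by (smt (verit) divide_le_eq mult_le_cancel_left1 norm_ge_zero)
  show "Hfun (t *\<^sub>R p) = t * Hfun p" if "0 < t" for t
    using p that by (rule Hfun_scaleR)
  show "Hfun p \<le> 4 * real CARD('d) * norm p"
    using p by (rule Hfun_le_norm)
  show "ereal (Hfun p) \<le> Liminf (at p) (\<lambda>q. ereal (Hfun q))"
    using p by (intro lsc_at_imp_Liminf lsc_at_Hfun)
qed

end
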